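(* Let $\mathcal{I}$ be an instance of SNSAT with $|\mathcal{I}|=n$, and let $\mathcal{K}_\mathcal{I}$ and $\psi_n$ be the Kripke structure and formula associated with $\mathcal{I}$ as described in the context. Then $v_\mathcal{I}(x_n)=\top$ if and only if $\mathcal{K}_\mathcal{I}\models[B]\bot\to\psi_n$, i.e., every initial track of $\mathcal{K}_\mathcal{I}$ satisfies $[B]\bot\to\psi_n$.
   Context: SNSAT: an instance $\mathcal{I}$ consists of Boolean variables $X=\{x_1,\dots,x_n\}$ and propositional formulas $F_1(Z_1),F_2(x_1,Z_2),\dots,F_n(x_1,\dots,x_{n-1},Z_n)$, where $F_i$ uses variables among $x_1,\dots,x_{i-1}$ and $Z_i=\{z_i^1,\dots,z_i^{j_i}\}$, the sets $Z_i$ being pairwise disjoint and disjoint from $X$; $|\mathcal{I}|=n$. The valuation $v_\mathcal{I}$ of $X$ is defined by $v_\mathcal{I}(x_i)=\top$ iff $F_i(v_\mathcal{I}(x_1),\dots,v_\mathcal{I}(x_{i-1}),Z_i)$ is satisfiable. Kripke structures, tracks and semantics: a finite Kripke structure $(\mathcal{AP},W,\delta,\mu,w_0)$ has left-total $\delta\subseteq W\times W$, labelling $\mu:W\to2^{\mathcal{AP}}$ and initial state $w_0$; a track is a nonempty finite sequence of states consecutive in $\delta$; it is initial if its first state is $w_0$; $\mathrm{fst},\mathrm{lst}$ are its first/last state. Formulas use proposition letters, $\neg,\wedge$ (other connectives as abbreviations), $\top,\bot$, $\langle A\rangle$, $\langle B\rangle$, $[B]\psi=\neg\langle B\rangle\neg\psi$.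 $\rho\models p$ iff $p\in\mu(w)$ for all states $w$ of $\rho$; $\rho\models\langle A\rangle\psi$ iff some track $\rho'$ with $\mathrm{fst}(\rho')=\mathrm{lst}(\rho)$ satisfies $\psi$; $\rho\models\langle B\rangle\psi$ iff some proper prefix $\rho(1,i)$, $1\le i<|\rho|$, satisfies $\psi$. $\mathcal{K}\models\psi$ iff all initial tracks satisfy $\psi$. The $F_i$ are read as formulas over proposition letters $X\cup Z$. Construction: let $Z=\bigcup_iZ_i$, $R=\{r_1,\dots,r_n\}$, $R_i=R\setminus\{r_i\}$. $\mathcal{K}_\mathcal{I}$ has proposition letters $X\cup Z\cup\{s,t\}\cup R\cup\{p_{\overline{x_i}}:1\le i\le n\}$ and distinct states $s_0$ and, for each $i$, $w_{x_i},\overline{w_{x_i}},\overline{s_i}$, and $w_{z_i^u},\overline{w_{z_i^u}}$ for $1\le u\le j_i$. Labels: $\mu(w_{x_i})=X\cup Z\cup\{s,t\}\cup R_i$; $\mu(\overline{w_{x_i}})=(X\setminus\{x_i\})\cup Z\cup\{s,t\}\cup R_i\cup\{p_{\overline{x_i}}\}$; $\mu(w_{z_i^u})=X\cup Z\cup\{s,t\}\cup R_i$; $\mu(\overline{w_{z_i^u}})=X\cup(Z\setminus\{z_i^u\})\cup\{s,t\}\cup R_i$; $\mu(\overline{s_i})=X\cup Z\cup\{t\}\cup R_i$; $\mu(s_0)=X\cup Z\cup\{s\}\cup R$. Call $L_i^0=\{w_{x_i},\overline{w_{x_i}}\}$ and $L_i^u=\{w_{z_i^u},\overline{w_{z_i^u}}\}$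 for $1\le u\le j_i$. Transitions: $\overline{w_{x_i}}\to\overline{s_i}\to w_{x_i}$; every state of $L_i^{u}$ has an edge to both states of $L_i^{u+1}$ for $0\le u<j_i$; every state of $L_i^{j_i}$ has an edge to both states of $L_{i-1}^0$ if $i\ge2$, and to $s_0$ if $i=1$; $s_0\to s_0$. The initial state is $w_{x_n}$. Formulas: $\ell_{=2}=\langle B\rangle\top\wedge[B][B]\bot$; $\psi_0=\bot$ and for $k\ge1$, $\psi_k=\langle A\rangle\varphi_k$ with $\varphi_k=(s\wedge\neg t)\wedge\bigwedge_{i=1}^n\big((x_i\wedge\neg r_i)\to F_i(x_1,\dots,x_{i-1},Z_i)\big)\wedge[B]\Big(\big(\bigvee_{i=1}^n\langle A\rangle p_{\overline{x_i}}\big)\to\langle A\rangle\big(\neg s\wedge\ell_{=2}\wedge\langle A\rangle(\ell_{=2}\wedge\neg\psi_{k-1})\big)\Big)$. *)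

theory Defs
  imports Main
begin

text \<open>LX i = x_i, LZ i u = z_i^u, LS = s, LT = t, LR i = r_i, LP i = p_{overline x_i}.\<close>
datatype letter = LX nat | LZ nat nat | LS | LT | LR nat | LP nat

datatype 'v pform = PVar 'v | PTrue | PFalse | PNot "'v pform"
  | PAnd "'v pform" "'v pform" | POr "'v pform" "'v pform"

primrec peval :: "('v \<Rightarrow> bool) \<Rightarrow> 'v pform \<Rightarrow> bool" where
  "peval a (PVar v) = a v"
| "peval a PTrue = True"
| "peval a PFalse = False"
| "peval a (PNot f) = (\<not> peval a f)"
| "peval a (PAnd f g) = (peval a f \<and> peval a g)"
| "peval a (POr f g) = (peval a f \<or> peval a g)"

primrec pvars :: "'v pform \<Rightarrow> 'v set" where
  "pvars (PVar v) = {v}"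
| "pvars PTrue = {}"
| "pvars PFalse = {}"
| "pvars (PNot f) = pvars f"
| "pvars (PAnd f g) = pvars f \<union> pvars g"
| "pvars (POr f g) = pvars f \<union> pvars g"

text \<open>An instance of size n: j i = |Z_i| and F i is the formula F_i (for 1 <= i <= n),
  using only x_1..x_{i-1} and z_i^1..z_i^{j i}.\<close>
definition snsat_instance :: "nat \<Rightarrow> (nat \<Rightarrow> nat) \<Rightarrow> (nat \<Rightarrow> letter pform) \<Rightarrow> bool" where
  "snsat_instance n j F \<longleftrightarrow>
     (\<forall>i\<in>{1..n}. pvars (F i) \<subseteq> LX ` {1..<i} \<union> {LZ i u | u. 1 \<le> u \<and> u \<le> j i})"

text \<open>F_i(b_1,...,b_{i-1},Z_i) is satisfiable: some assignment to the remaining letters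
  makes it true, the x_k being fixed to val k.\<close>
definition sat_with :: "(nat \<Rightarrow> bool) \<Rightarrow> letter pform \<Rightarrow> bool" where
  "sat_with val f \<longleftrightarrow>
     (\<exists>z. peval (\<lambda>l. case l of LX k \<Rightarrow> val k | _ \<Rightarrow> z l) f)"

text \<open>snval F i k = v_I(x_k) for k <= i (computed stage by stage).\<close>
primrec snval :: "(nat \<Rightarrow> letter pform) \<Rightarrow> nat \<Rightarrow> nat \<Rightarrow> bool" where
  "snval F 0 = (\<lambda>k. False)"
| "snval F (Suc i) = (snval F i)(Suc i := sat_with (snval F i) (F (Suc i)))"

definition vI :: "(nat \<Rightarrow> letter pform) \<Rightarrow> nat \<Rightarrow> bool" where
  "vI F i = snval F i i"

record ('ap, 'w) kripke =
  kAP :: "'ap set"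
  kW :: "'w set"
  kR :: "('w \<times> 'w) set"
  kmu :: "'w \<Rightarrow> 'ap set"
  kinit :: 'w

definition is_track :: "('ap, 'w) kripke \<Rightarrow> 'w list \<Rightarrow> bool" where
  "is_track K \<rho> \<longleftrightarrow> \<rho> \<noteq> [] \<and> set \<rho> \<subseteq> kW K \<and>
     (\<forall>i. Suc i < length \<rho> \<longrightarrow> (\<rho> ! i, \<rho> ! Suc i) \<in> kR K)"

datatype 'ap hs = HProp 'ap | HNot "'ap hs" | HAnd "'ap hs" "'ap hs" | HTop | HBot
  | HA "'ap hs" | HB "'ap hs"

definition HOr :: "'ap hs \<Rightarrow> 'ap hs \<Rightarrow> 'ap hs" where
  "HOr f g = HNot (HAnd (HNot f) (HNot g))"
definition HImp :: "'ap hs \<Rightarrow> 'ap hs \<Rightarrow> 'ap hs" where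
  "HImp f g = HNot (HAnd f (HNot g))"
definition HBoxB :: "'ap hs \<Rightarrow> 'ap hs" where
  "HBoxB f = HNot (HB (HNot f))"

primrec hsat :: "('ap, 'w) kripke \<Rightarrow> 'ap hs \<Rightarrow> 'w list \<Rightarrow> bool" where
  "hsat K (HProp p) \<rho> = (\<forall>w\<in>set \<rho>. p \<in> kmu K w)"
| "hsat K (HNot f) \<rho> = (\<not> hsat K f \<rho>)"
| "hsat K (HAnd f g) \<rho> = (hsat K f \<rho> \<and> hsat K g \<rho>)"
| "hsat K HTop \<rho> = True"
| "hsat K HBot \<rho> = False"
| "hsat K (HA f) \<rho> = (\<exists>\<rho>'. is_track K \<rho>' \<and> hd \<rho>' = last \<rho> \<and> hsat K f \<rho>')"
| "hsat K (HB f) \<rho> = (\<exists>i. 1 \<le> i \<and> i < length \<rho> \<and> hsat K f (take i \<rho>))"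

definition kmodels :: "('ap, 'w) kripke \<Rightarrow> 'ap hs \<Rightarrow> bool" where
  "kmodels K f \<longleftrightarrow> (\<forall>\<rho>. is_track K \<rho> \<and> hd \<rho> = kinit K \<longrightarrow> hsat K f \<rho>)"

primrec pf_to_hs :: "'ap pform \<Rightarrow> 'ap hs" where
  "pf_to_hs (PVar v) = HProp v"
| "pf_to_hs PTrue = HTop"
| "pf_to_hs PFalse = HBot"
| "pf_to_hs (PNot f) = HNot (pf_to_hs f)"
| "pf_to_hs (PAnd f g) = HAnd (pf_to_hs f) (pf_to_hs g)"
| "pf_to_hs (POr f g) = HOr (pf_to_hs f) (pf_to_hs g)"

datatype state = S0 | WX nat | WXb nat | Sb nat | WZ nat nat | WZb nat nat

definition Xset :: "nat \<Rightarrow> letter set" where "Xset n = LX ` {1..n}"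
definition Zset :: "nat \<Rightarrow> (nat \<Rightarrow> nat) \<Rightarrow> letter set" where
  "Zset n j = {LZ i u | i u. 1 \<le> i \<and> i \<le> n \<and> 1 \<le> u \<and> u \<le> j i}"
definition Rset :: "nat \<Rightarrow> letter set" where "Rset n = LR ` {1..n}"
definition Rminus :: "nat \<Rightarrow> nat \<Rightarrow> letter set" where "Rminus n i = Rset n - {LR i}"

definition layer :: "nat \<Rightarrow> nat \<Rightarrow> state set" where
  "layer i u = (if u = 0 then {WX i, WXb i} else {WZ i u, WZb i u})"

definition KI_states :: "nat \<Rightarrow> (nat \<Rightarrow> nat) \<Rightarrow> state set" where
  "KI_states n j = {S0} \<union> (\<Union>i\<in>{1..n}. {WX i, WXb i, Sb i}
      \<union> (\<Union>u\<in>{1..j i}. {WZ i u, WZb i u}))"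

fun KI_label :: "nat \<Rightarrow> (nat \<Rightarrow> nat) \<Rightarrow> state \<Rightarrow> letter set" where
  "KI_label n j (WX i) = Xset n \<union> Zset n j \<union> {LS, LT} \<union> Rminus n i"
| "KI_label n j (WXb i) = (Xset n - {LX i}) \<union> Zset n j \<union> {LS, LT} \<union> Rminus n i \<union> {LP i}"
| "KI_label n j (WZ i u) = Xset n \<union> Zset n j \<union> {LS, LT} \<union> Rminus n i"
| "KI_label n j (WZb i u) = Xset n \<union> (Zset n j - {LZ i u}) \<union> {LS, LT} \<union> Rminus n i"
| "KI_label n j (Sb i) = Xset n \<union> Zset n j \<union> {LT} \<union> Rminus n i"
| "KI_label n j S0 = Xset n \<union> Zset n j \<union> {LS} \<union> Rset n"

definition KI_trans :: "nat \<Rightarrow> (nat \<Rightarrow> nat) \<Rightarrow> (state \<times> state) set" where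
  "KI_trans n j =
     {(WXb i, Sb i) | i. 1 \<le> i \<and> i \<le> n}
   \<union> {(Sb i, WX i) | i. 1 \<le> i \<and> i \<le> n}
   \<union> {(a, b) | a b i u. 1 \<le> i \<and> i \<le> n \<and> u < j i \<and> a \<in> layer i u \<and> b \<in> layer i (Suc u)}
   \<union> {(a, b) | a b i. 2 \<le> i \<and> i \<le> n \<and> a \<in> layer i (j i) \<and> b \<in> layer (i - 1) 0}
   \<union> {(a, S0) | a. 1 \<le> n \<and> a \<in> layer 1 (j 1)}
   \<union> {(S0, S0)}"

definition KI :: "nat \<Rightarrow> (nat \<Rightarrow> nat) \<Rightarrow> (letter, state) kripke" where
  "KI n j = \<lparr> kAP = Xset n \<union> Zset n j \<union> {LS, LT} \<union> Rset n \<union> LP ` {1..n},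
              kW = KI_states n j, kR = KI_trans n j, kmu = KI_label n j, kinit = WX n \<rparr>"

definition ell2 :: "letter hs" where
  "ell2 = HAnd (HB HTop) (HBoxB (HBoxB HBot))"

definition bigAnd :: "letter hs list \<Rightarrow> letter hs" where
  "bigAnd fs = foldr HAnd fs HTop"
definition bigOr :: "letter hs list \<Rightarrow> letter hs" where
  "bigOr fs = foldr HOr fs HBot"

text \<open>phi_body n F p = phi_k with p standing for psi_{k-1}; psi_0 = bot, psi_{k+1} = <A> phi_{k+1}.\<close>
definition phi_body :: "nat \<Rightarrow> (nat \<Rightarrow> letter pform) \<Rightarrow> letter hs \<Rightarrow> letter hs" where
  "phi_body n F p =
     HAnd (HAnd (HProp LS) (HNot (HProp LT)))
     (HAnd (bigAnd (map (\<lambda>i. HImp (HAnd (HProp (LX i)) (HNot (HProp (LR i)))) (pf_to_hs (F i))) [1..<Suc n]))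
       (HBoxB (HImp (bigOr (map (\<lambda>i. HA (HProp (LP i))) [1..<Suc n]))
                    (HA (HAnd (HNot (HProp LS)) (HAnd ell2 (HA (HAnd ell2 (HNot p)))))))))"

primrec psi :: "nat \<Rightarrow> (nat \<Rightarrow> letter pform) \<Rightarrow> nat \<Rightarrow> letter hs" where
  "psi n F 0 = HBot"
| "psi n F (Suc k) = HA (phi_body n F (psi n F k))"

end

theory Submission
  imports Defs
begin

text \<open>
  By induction on k, a track ending in WX i with i \<le> k satisfies \<psi>_k iff v_I(x_i) holds.
  A track from WX i satisfying \<phi>_k avoids every Sb l (label s) but reaches S0 (label t missing),
  so it passes through every block l \<le> i: no r_l holds on it, and x_l holds on it exactly when it
  avoids WXb l. Each visit to WXb l lets the [B]-conjunct go WXb l, Sb l, WX l and demand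
  \<not>\<psi>_{k-1} at WX l, i.e. \<not>v_I(x_l) by induction, while the implications (x_l \<and> \<not>r_l) \<rightarrow> F_l make F_l
  true on the track whenever x_l is. By induction on l the track's valuation of x_1, ..., x_{i-1}
  is v_I, and it satisfies F_i. Conversely, the track choosing in each layer the state dictated
  by v_I and by satisfying assignments of the Z_l is a witness. Finally, the only initial track
  satisfying [B]\<bottom> is the single state WX n.
\<close>

section \<open>Tracks and the semantics of AB\<close>

lemma is_track_iff_successively:
  "is_track K \<rho> \<longleftrightarrow> \<rho> \<noteq> [] \<and> set \<rho> \<subseteq> kW K \<and> successively (\<lambda>a b. (a, b) \<in> kR K) \<rho>"
  by (simp add: is_track_def successively_conv_nth)

lemma is_track_singleton: "is_track K [a] \<longleftrightarrow> a \<in> kW K"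
  by (simp add: is_track_iff_successively)

lemma is_track_Cons_Cons:
  "is_track K (a # b # \<rho>) \<longleftrightarrow> a \<in> kW K \<and> (a, b) \<in> kR K \<and> is_track K (b # \<rho>)"
  by (auto simp: is_track_iff_successively)

lemma is_track_append:
  "is_track K \<rho> \<Longrightarrow> is_track K \<sigma> \<Longrightarrow> (last \<rho>, hd \<sigma>) \<in> kR K \<Longrightarrow> is_track K (\<rho> @ \<sigma>)"
  by (auto simp: is_track_iff_successively successively_append_iff)

definition track_val :: "('ap, 'w) kripke \<Rightarrow> 'w list \<Rightarrow> 'ap \<Rightarrow> bool" where
  "track_val K \<rho> p \<longleftrightarrow> (\<forall>w\<in>set \<rho>. p \<in> kmu K w)"

lemma hsat_HProp: "hsat K (HProp p) \<rho> = track_val K \<rho> p"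
  by (simp add: track_val_def)

lemma hsat_HImp: "hsat K (HImp f g) \<rho> \<longleftrightarrow> (hsat K f \<rho> \<longrightarrow> hsat K g \<rho>)"
  by (auto simp: HImp_def)

lemma hsat_HOr: "hsat K (HOr f g) \<rho> \<longleftrightarrow> hsat K f \<rho> \<or> hsat K g \<rho>"
  by (auto simp: HOr_def)

lemma hsat_HBoxB: "hsat K (HBoxB f) \<rho> \<longleftrightarrow> (\<forall>i. 1 \<le> i \<and> i < length \<rho> \<longrightarrow> hsat K f (take i \<rho>))"
  by (auto simp: HBoxB_def)

lemma hsat_bigAnd: "hsat K (bigAnd fs) \<rho> \<longleftrightarrow> (\<forall>f\<in>set fs. hsat K f \<rho>)"
  by (induction fs) (auto simp: bigAnd_def)

lemma hsat_bigOr: "hsat K (bigOr fs) \<rho> \<longleftrightarrow> (\<exists>f\<in>set fs. hsat K f \<rho>)"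
  by (induction fs) (auto simp: bigOr_def hsat_HOr)

lemma hsat_pf_to_hs: "hsat K (pf_to_hs f) \<rho> = peval (track_val K \<rho>) f"
  by (induction f) (auto simp: hsat_HOr track_val_def)

lemma hsat_HBoxB_HBot: "hsat K (HBoxB HBot) \<rho> \<longleftrightarrow> length \<rho> \<le> 1"
  by (auto simp: hsat_HBoxB not_le dest: spec[of _ 1])

lemma hsat_ell2: "hsat K ell2 \<rho> \<longleftrightarrow> length \<rho> = 2"
proof -
  have "hsat K (HBoxB (HBoxB HBot)) \<rho> \<longleftrightarrow> (\<forall>i. 1 \<le> i \<and> i < length \<rho> \<longrightarrow> min (length \<rho>) i \<le> 1)"
    unfolding hsat_HBoxB[of K "HBoxB HBot"] hsat_HBoxB_HBot length_take by (rule refl)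
  also have "\<dots> \<longleftrightarrow> length \<rho> \<le> 2"
    by (auto simp: min_def dest!: spec[of _ 2])
  finally have "hsat K (HBoxB (HBoxB HBot)) \<rho> \<longleftrightarrow> length \<rho> \<le> 2" .
  then show ?thesis
    by (auto simp: ell2_def)
qed

lemma length_eq_2_iff: "length xs = 2 \<longleftrightarrow> (\<exists>a b. xs = [a, b])"
  by (auto simp: numeral_2_eq_2 length_Suc_conv)

lemma kmodels_HImp_HBoxB_HBot:
  assumes "kinit K \<in> kW K"
  shows "kmodels K (HImp (HBoxB HBot) f) \<longleftrightarrow> hsat K f [kinit K]"
proof -
  have point: "is_track K \<rho> \<and> hd \<rho> = kinit K \<and> length \<rho> \<le> 1 \<longleftrightarrow> \<rho> = [kinit K]" for \<rho>
    using assms by (cases \<rho>) (auto simp: is_track_singleton is_track_def)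
  have "kmodels K (HImp (HBoxB HBot) f) \<longleftrightarrow>
      (\<forall>\<rho>. is_track K \<rho> \<and> hd \<rho> = kinit K \<and> length \<rho> \<le> 1 \<longrightarrow> hsat K f \<rho>)"
    unfolding kmodels_def hsat_HImp hsat_HBoxB_HBot by blast
  then show ?thesis
    unfolding point by simp
qed

lemma in_set_butlast_iff_last_take:
  "x \<in> set (butlast xs) \<longleftrightarrow> (\<exists>m. 1 \<le> m \<and> m < length xs \<and> last (take m xs) = x)"
proof -
  have last_take: "last (take (Suc q) xs) = xs ! q" if "q < length xs" for q
    using that by (simp add: take_Suc_conv_app_nth)
  have "x \<in> set (butlast xs) \<longleftrightarrow> (\<exists>q. Suc q < length xs \<and> xs ! q = x)"
    by (metis in_set_conv_nth length_butlast less_diff_conv nth_butlast plus_1_eq_Suc add.commute)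
  also have "\<dots> \<longleftrightarrow> (\<exists>m. 1 \<le> m \<and> m < length xs \<and> last (take m xs) = x)"
  proof
    assume "\<exists>q. Suc q < length xs \<and> xs ! q = x"
    then obtain q where "Suc q < length xs" "xs ! q = x"
      by blast
    then show "\<exists>m. 1 \<le> m \<and> m < length xs \<and> last (take m xs) = x"
      using last_take[of q] by (intro exI[of _ "Suc q"]) simp
  next
    assume "\<exists>m. 1 \<le> m \<and> m < length xs \<and> last (take m xs) = x"
    then obtain q where "Suc q < length xs" "last (take (Suc q) xs) = x"
      by (metis Suc_pred' less_le_trans zero_less_one)
    then show "\<exists>q. Suc q < length xs \<and> xs ! q = x"
      using last_take by auto
  qed
  finally show ?thesis .
qed

abbreviation probe :: "letter hs \<Rightarrow> letter hs" where
  "probe p \<equiv> HA (HAnd (HNot (HProp LS)) (HAnd ell2 (HA (HAnd ell2 (HNot p)))))"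

lemma hsat_phi_body:
  "hsat K (phi_body n F p) \<rho> \<longleftrightarrow>
     track_val K \<rho> LS \<and> \<not> track_val K \<rho> LT \<and>
     (\<forall>l\<in>{1..n}. track_val K \<rho> (LX l) \<and> \<not> track_val K \<rho> (LR l) \<longrightarrow> peval (track_val K \<rho>) (F l)) \<and>
     (\<forall>m. 1 \<le> m \<and> m < length \<rho> \<longrightarrow>
        (\<exists>l\<in>{1..n}. hsat K (HA (HProp (LP l))) (take m \<rho>)) \<longrightarrow> hsat K (probe p) (take m \<rho>))"
  unfolding phi_body_def
  by (simp add: hsat_bigAnd hsat_bigOr hsat_HImp hsat_HBoxB hsat_HProp hsat_pf_to_hs
      atLeastLessThanSuc_atLeastAtMost del: upt_Suc hsat.simps(1))

section \<open>SNSAT valuations\<close>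

lemma peval_cong: "(\<And>v. v \<in> pvars f \<Longrightarrow> a v = b v) \<Longrightarrow> peval a f = peval b f"
  by (induction f) auto

lemma snval_eq: "snval F i k \<longleftrightarrow> k \<le> i \<and> vI F k"
proof (induction i arbitrary: k)
  case 0
  then show ?case
    by (cases k) (simp_all add: vI_def)
next
  case (Suc i)
  have "vI F (Suc i) = sat_with (snval F i) (F (Suc i))"
    by (simp add: vI_def)
  then show ?case
    using Suc.IH by (auto simp: le_Suc_eq)
qed

lemma vI_iff_sat_with: "1 \<le> l \<Longrightarrow> vI F l \<longleftrightarrow> sat_with (\<lambda>k. k < l \<and> vI F k) (F l)"
proof -
  assume "1 \<le> l"
  then obtain m where l: "l = Suc m"
    using not0_implies_Suc by fastforce
  have "snval F m = (\<lambda>k. k < l \<and> vI F k)"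
    by (auto simp: l snval_eq)
  then show ?thesis
    by (simp add: l vI_def)
qed

section \<open>The Kripke structure K_I\<close>

fun block :: "state \<Rightarrow> nat" where
  "block S0 = 0"
| "block (WX i) = i"
| "block (WXb i) = i"
| "block (Sb i) = i"
| "block (WZ i u) = i"
| "block (WZb i u) = i"

lemma KI_simps [simp]:
  "kW (KI n j) = KI_states n j" "kR (KI n j) = KI_trans n j"
  "kmu (KI n j) = KI_label n j" "kinit (KI n j) = WX n"
  by (simp_all add: KI_def)

lemma KI_states_WX: "WX l \<in> KI_states n j \<longleftrightarrow> 1 \<le> l \<and> l \<le> n"
  and KI_states_WXb: "WXb l \<in> KI_states n j \<longleftrightarrow> 1 \<le> l \<and> l \<le> n"
  and KI_states_Sb: "Sb l \<in> KI_states n j \<longleftrightarrow> 1 \<le> l \<and> l \<le> n"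
  and KI_states_S0: "S0 \<in> KI_states n j"
  by (auto simp: KI_states_def)

lemma layer_subset_KI_states: "1 \<le> l \<Longrightarrow> l \<le> n \<Longrightarrow> u \<le> j l \<Longrightarrow> layer l u \<subseteq> KI_states n j"
  by (auto simp: layer_def KI_states_def)

lemma KI_label_LX: "LX k \<in> KI_label n j w \<longleftrightarrow> 1 \<le> k \<and> k \<le> n \<and> w \<noteq> WXb k"
  and KI_label_LZ: "LZ l u \<in> KI_label n j w \<longleftrightarrow> LZ l u \<in> Zset n j \<and> w \<noteq> WZb l u"
  and KI_label_LR: "LR l \<in> KI_label n j w \<longleftrightarrow> 1 \<le> l \<and> l \<le> n \<and> (w = S0 \<or> block w \<noteq> l)"
  and KI_label_LS: "LS \<in> KI_label n j w \<longleftrightarrow> (\<forall>c. w \<noteq> Sb c)"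
  and KI_label_LT: "LT \<in> KI_label n j w \<longleftrightarrow> w \<noteq> S0"
  and KI_label_LP: "LP l \<in> KI_label n j w \<longleftrightarrow> w = WXb l"
  by (cases w; auto simp: Xset_def Zset_def Rset_def Rminus_def)+

lemma KI_trans_into_Sb: "(a, Sb l) \<in> KI_trans n j \<Longrightarrow> a = WXb l"
  and KI_trans_from_Sb: "(Sb l, b) \<in> KI_trans n j \<Longrightarrow> b = WX l"
  and KI_trans_into_WXb: "(a, WXb l) \<in> KI_trans n j \<Longrightarrow> block a = Suc l"
  and KI_trans_from_S0: "(S0, b) \<in> KI_trans n j \<Longrightarrow> b = S0"
  and KI_trans_block: "(a, b) \<in> KI_trans n j \<Longrightarrow> block b \<le> block a \<and> block a \<le> Suc (block b)"
  by (auto simp: KI_trans_def layer_def split: if_splits)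

lemma KI_trans_WXb_Sb: "1 \<le> l \<Longrightarrow> l \<le> n \<Longrightarrow> (WXb l, Sb l) \<in> KI_trans n j"
  and KI_trans_Sb_WX: "1 \<le> l \<Longrightarrow> l \<le> n \<Longrightarrow> (Sb l, WX l) \<in> KI_trans n j"
  and KI_trans_layer:
    "1 \<le> l \<Longrightarrow> l \<le> n \<Longrightarrow> u < j l \<Longrightarrow> a \<in> layer l u \<Longrightarrow> b \<in> layer l (Suc u) \<Longrightarrow>
     (a, b) \<in> KI_trans n j"
  and KI_trans_down:
    "2 \<le> l \<Longrightarrow> l \<le> n \<Longrightarrow> a \<in> layer l (j l) \<Longrightarrow> b \<in> layer (l - 1) 0 \<Longrightarrow>
     (a, b) \<in> KI_trans n j"
  and KI_trans_to_S0: "1 \<le> n \<Longrightarrow> a \<in> layer 1 (j 1) \<Longrightarrow> (a, S0) \<in> KI_trans n j"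
  unfolding KI_trans_def by blast+

lemma track_val_KI_LX: "1 \<le> k \<Longrightarrow> k \<le> n \<Longrightarrow> track_val (KI n j) \<rho> (LX k) \<longleftrightarrow> WXb k \<notin> set \<rho>"
  and track_val_KI_LZ: "LZ l u \<in> Zset n j \<Longrightarrow> track_val (KI n j) \<rho> (LZ l u) \<longleftrightarrow> WZb l u \<notin> set \<rho>"
  and track_val_KI_LR:
    "1 \<le> l \<Longrightarrow> l \<le> n \<Longrightarrow> track_val (KI n j) \<rho> (LR l) \<longleftrightarrow> (\<forall>w\<in>set \<rho>. w = S0 \<or> block w \<noteq> l)"
  and track_val_KI_LS: "track_val (KI n j) \<rho> LS \<longleftrightarrow> (\<forall>c. Sb c \<notin> set \<rho>)"
  and track_val_KI_LT: "track_val (KI n j) \<rho> LT \<longleftrightarrow> S0 \<notin> set \<rho>"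
  by (auto simp: track_val_def KI_label_LX KI_label_LZ KI_label_LR KI_label_LS KI_label_LT)

lemma KI_track_last_S0: "is_track (KI n j) \<rho> \<Longrightarrow> S0 \<in> set \<rho> \<Longrightarrow> last \<rho> = S0"
proof (induction \<rho> rule: induct_list012)
  case (3 a b \<rho>)
  then have "S0 \<in> set (b # \<rho>)"
    using KI_trans_from_S0 by (auto simp: is_track_Cons_Cons)
  with 3 show ?case
    by (simp add: is_track_Cons_Cons)
qed auto

lemma KI_track_visits_block:
  "is_track (KI n j) \<rho> \<Longrightarrow> S0 \<in> set \<rho> \<Longrightarrow> 1 \<le> l \<Longrightarrow> l \<le> block (hd \<rho>) \<Longrightarrow>
   \<exists>w\<in>set \<rho>. w \<noteq> S0 \<and> block w = l"
proof (induction \<rho> rule: induct_list012)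
  case (3 a b \<rho>)
  show ?case
  proof (cases "block a = l")
    case False
    have "(a, b) \<in> KI_trans n j"
      using "3.prems"(1) by (simp add: is_track_Cons_Cons)
    with False "3.prems"(3,4) have "a \<noteq> S0" "l \<le> block b"
      using KI_trans_block by fastforce+
    with 3 show ?thesis
      by (auto simp: is_track_Cons_Cons)
  qed (use "3.prems" in auto)
qed auto

lemma KI_track_avoids_WXb:
  "is_track (KI n j) \<rho> \<Longrightarrow> block (hd \<rho>) \<le> m \<Longrightarrow> hd \<rho> \<noteq> WXb m \<Longrightarrow> WXb m \<notin> set \<rho>"
proof (induction \<rho> rule: induct_list012)
  case (3 a b \<rho>)
  then have "(a, b) \<in> KI_trans n j"
    by (simp add: is_track_Cons_Cons)
  then have "block b \<le> m" "b \<noteq> WXb m"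
    using "3.prems"(2,3) KI_trans_block KI_trans_into_WXb by fastforce+
  with 3 show ?case
    by (simp add: is_track_Cons_Cons)
qed auto

lemma hsat_KI_A_LP: "hsat (KI n j) (HA (HProp (LP l))) \<sigma> \<longleftrightarrow> 1 \<le> l \<and> l \<le> n \<and> last \<sigma> = WXb l"
proof
  assume "hsat (KI n j) (HA (HProp (LP l))) \<sigma>"
  then obtain \<rho> where "is_track (KI n j) \<rho>" "hd \<rho> = last \<sigma>" "\<forall>w\<in>set \<rho>. LP l \<in> KI_label n j w"
    by auto
  moreover have "hd \<rho> \<in> set \<rho>" "set \<rho> \<subseteq> KI_states n j"
    using \<open>is_track (KI n j) \<rho>\<close> by (auto simp: is_track_def)
  ultimately have "hd \<rho> = WXb l" "WXb l \<in> KI_states n j"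
    by (auto simp: KI_label_LP)
  then show "1 \<le> l \<and> l \<le> n \<and> last \<sigma> = WXb l"
    using \<open>hd \<rho> = last \<sigma>\<close> by (simp add: KI_states_WXb)
next
  assume "1 \<le> l \<and> l \<le> n \<and> last \<sigma> = WXb l"
  then show "hsat (KI n j) (HA (HProp (LP l))) \<sigma>"
    by (auto simp: is_track_singleton KI_states_WXb KI_label_LP intro!: exI[of _ "[WXb l]"])
qed

lemma hsat_KI_probe:
  assumes l: "1 \<le> l" "l \<le> n" and last: "last \<sigma> = WXb l"
  shows "hsat (KI n j) (probe p) \<sigma> \<longleftrightarrow> \<not> hsat (KI n j) p [Sb l, WX l]"
proof -
  have from_WXb: "is_track (KI n j) \<rho> \<and> hd \<rho> = WXb l \<and> length \<rho> = 2 \<and> \<not> track_val (KI n j) \<rho> LS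
      \<longleftrightarrow> \<rho> = [WXb l, Sb l]" for \<rho>
    using l
    by (auto dest: KI_trans_into_Sb simp: length_eq_2_iff is_track_Cons_Cons is_track_singleton track_val_KI_LS
        KI_states_WXb KI_states_Sb KI_trans_WXb_Sb)
  have from_Sb: "is_track (KI n j) \<rho> \<and> hd \<rho> = Sb l \<and> length \<rho> = 2 \<longleftrightarrow> \<rho> = [Sb l, WX l]" for \<rho>
    using l KI_trans_from_Sb
    by (auto simp: length_eq_2_iff is_track_Cons_Cons is_track_singleton
        KI_states_Sb KI_states_WX KI_trans_Sb_WX)
  have "hsat (KI n j) (probe p) \<sigma> \<longleftrightarrow>
      (\<exists>\<rho>. (is_track (KI n j) \<rho> \<and> hd \<rho> = WXb l \<and> length \<rho> = 2 \<and> \<not> track_val (KI n j) \<rho> LS) \<and>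
        hsat (KI n j) (HA (HAnd ell2 (HNot p))) \<rho>)"
    using last by (auto simp: hsat_ell2 hsat_HProp simp del: hsat.simps(1))
  also have "\<dots> \<longleftrightarrow> hsat (KI n j) (HA (HAnd ell2 (HNot p))) [WXb l, Sb l]"
    unfolding from_WXb by simp
  also have "\<dots> \<longleftrightarrow> (\<exists>\<rho>. (is_track (KI n j) \<rho> \<and> hd \<rho> = Sb l \<and> length \<rho> = 2) \<and> \<not> hsat (KI n j) p \<rho>)"
    by (auto simp: hsat_ell2)
  also have "\<dots> \<longleftrightarrow> \<not> hsat (KI n j) p [Sb l, WX l]"
    unfolding from_Sb by simp
  finally show ?thesis .
qed

lemma hsat_KI_phi_body:
  "hsat (KI n j) (phi_body n F p) \<rho> \<longleftrightarrow>
     (\<forall>c. Sb c \<notin> set \<rho>) \<and> S0 \<in> set \<rho> \<and>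
     (\<forall>l\<in>{1..n}. track_val (KI n j) \<rho> (LX l) \<and> \<not> track_val (KI n j) \<rho> (LR l) \<longrightarrow>
        peval (track_val (KI n j) \<rho>) (F l)) \<and>
     (\<forall>l\<in>{1..n}. WXb l \<in> set (butlast \<rho>) \<longrightarrow> \<not> hsat (KI n j) p [Sb l, WX l])"
proof -
  have probe_cond: "((\<exists>l\<in>{1..n}. hsat (KI n j) (HA (HProp (LP l))) \<tau>) \<longrightarrow> hsat (KI n j) (probe p) \<tau>)
      \<longleftrightarrow> (\<forall>l\<in>{1..n}. last \<tau> = WXb l \<longrightarrow> \<not> hsat (KI n j) p [Sb l, WX l])" for \<tau>
    using hsat_KI_probe[of _ n \<tau>] by (auto simp: hsat_KI_A_LP simp del: hsat.simps(6))
  have "(\<forall>m. 1 \<le> m \<and> m < length \<rho> \<longrightarrow>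
        (\<exists>l\<in>{1..n}. hsat (KI n j) (HA (HProp (LP l))) (take m \<rho>)) \<longrightarrow>
        hsat (KI n j) (probe p) (take m \<rho>)) \<longleftrightarrow>
      (\<forall>l\<in>{1..n}. WXb l \<in> set (butlast \<rho>) \<longrightarrow> \<not> hsat (KI n j) p [Sb l, WX l])"
    unfolding probe_cond in_set_butlast_iff_last_take by blast
  then show ?thesis
    by (simp add: hsat_phi_body track_val_KI_LS track_val_KI_LT)
qed

section \<open>Correctness of the reduction\<close>

locale snsat_reduction =
  fixes n :: nat and j :: "nat \<Rightarrow> nat" and F :: "nat \<Rightarrow> letter pform"
  assumes is_instance: "snsat_instance n j F"
begin

lemma F_peval_cong:
  assumes "1 \<le> l" "l \<le> n"
    and "\<And>k. 1 \<le> k \<Longrightarrow> k < l \<Longrightarrow> a (LX k) = b (LX k)"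
    and "\<And>u. 1 \<le> u \<Longrightarrow> u \<le> j l \<Longrightarrow> a (LZ l u) = b (LZ l u)"
  shows "peval a (F l) = peval b (F l)"
proof (rule peval_cong)
  fix v
  assume "v \<in> pvars (F l)"
  then have "v \<in> LX ` {1..<l} \<union> {LZ l u | u. 1 \<le> u \<and> u \<le> j l}"
    using is_instance assms(1,2) unfolding snsat_instance_def by auto
  then show "a v = b v"
    using assms(3,4) by auto
qed

definition stage_val :: "nat \<Rightarrow> (letter \<Rightarrow> bool) \<Rightarrow> letter \<Rightarrow> bool" where
  "stage_val l z = (\<lambda>v. case v of LX k \<Rightarrow> k < l \<and> vI F k | _ \<Rightarrow> z v)"

text \<open>Junk when v_I(x_l) is false; it is only consulted when v_I(x_l) holds.\<close>
definition z_witness :: "nat \<Rightarrow> letter \<Rightarrow> bool" where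
  "z_witness l = (SOME z. peval (stage_val l z) (F l))"

lemma vI_iff_stage_val: "1 \<le> l \<Longrightarrow> vI F l \<longleftrightarrow> (\<exists>z. peval (stage_val l z) (F l))"
  by (simp add: vI_iff_sat_with sat_with_def stage_val_def)

lemma vI_if_peval:
  assumes "1 \<le> l" "l \<le> n" "\<And>k. 1 \<le> k \<Longrightarrow> k < l \<Longrightarrow> a (LX k) = vI F k" "peval a (F l)"
  shows "vI F l"
proof -
  have "peval (stage_val l a) (F l) = peval a (F l)"
    using assms(1-3) by (intro F_peval_cong) (simp_all add: stage_val_def)
  then show ?thesis
    using assms(1,4) vI_iff_stage_val by blast
qed

lemma peval_if_vI:
  assumes "1 \<le> l" "l \<le> n" "vI F l"
    and "\<And>k. 1 \<le> k \<Longrightarrow> k < l \<Longrightarrow> a (LX k) = vI F k"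
    and "\<And>u. 1 \<le> u \<Longrightarrow> u \<le> j l \<Longrightarrow> a (LZ l u) = z_witness l (LZ l u)"
  shows "peval a (F l)"
proof -
  obtain z where "peval (stage_val l z) (F l)"
    using assms(1,3) vI_iff_stage_val by blast
  then have "peval (stage_val l (z_witness l)) (F l)"
    unfolding z_witness_def by (rule someI[where P = "\<lambda>z. peval (stage_val l z) (F l)"])
  moreover have "peval a (F l) = peval (stage_val l (z_witness l)) (F l)"
    using assms(1,2,4,5) by (intro F_peval_cong) (simp_all add: stage_val_def)
  ultimately show ?thesis
    by simp
qed

lemma vI_if_hsat_phi_body:
  assumes i: "1 \<le> i" "i \<le> n"
    and prev: "\<And>l. 1 \<le> l \<Longrightarrow> l < i \<Longrightarrow> hsat (KI n j) p [Sb l, WX l] \<longleftrightarrow> vI F l"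
    and track: "is_track (KI n j) \<rho>" "hd \<rho> = WX i"
    and phi: "hsat (KI n j) (phi_body n F p) \<rho>"
  shows "vI F i"
proof -
  let ?val = "track_val (KI n j) \<rho>"
  have S0: "S0 \<in> set \<rho>"
    and F_true: "\<And>l. 1 \<le> l \<Longrightarrow> l \<le> n \<Longrightarrow> ?val (LX l) \<Longrightarrow> \<not> ?val (LR l) \<Longrightarrow> peval ?val (F l)"
    and probes: "\<And>l. 1 \<le> l \<Longrightarrow> l \<le> n \<Longrightarrow> WXb l \<in> set (butlast \<rho>) \<Longrightarrow> \<not> hsat (KI n j) p [Sb l, WX l]"
    using phi by (auto simp: hsat_KI_phi_body)
  have no_R: "\<not> ?val (LR l)" if "1 \<le> l" "l \<le> i" for l
    using KI_track_visits_block[OF track(1) S0 that(1)] that i track(2) by (auto simp: track_val_KI_LR)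
  have WXb_refutes: "\<not> vI F l" if "1 \<le> l" "l < i" "WXb l \<in> set \<rho>" for l
  proof -
    have "WXb l \<in> set (butlast \<rho>)"
      using that(3) KI_track_last_S0[OF track(1) S0] by (cases \<rho> rule: rev_cases) auto
    then show ?thesis
      using probes[of l] prev[of l] that i by auto
  qed
  have sat_step: "vI F l"
    if "1 \<le> l" "l \<le> i" "?val (LX l)" "\<And>k. 1 \<le> k \<Longrightarrow> k < l \<Longrightarrow> ?val (LX k) = vI F k" for l
    using vI_if_peval[OF that(1) _ that(4)] F_true[OF that(1) _ that(3) no_R[OF that(1,2)]] that(2) i(2)
    by auto
  have agree: "?val (LX k) = vI F k" if "1 \<le> k" "k < i" for k
    using that
  proof (induction k rule: less_induct)
    case (less k)
    show ?case
    proof (cases "?val (LX k)")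
      case True
      then show ?thesis
        using sat_step[of k] less by auto
    next
      case False
      then have "WXb k \<in> set \<rho>"
        using less.prems i by (simp add: track_val_KI_LX)
      then show ?thesis
        using WXb_refutes less.prems False by auto
    qed
  qed
  have "WXb i \<notin> set \<rho>"
    using KI_track_avoids_WXb[OF track(1)] track(2) by simp
  then have "?val (LX i)"
    using i by (simp add: track_val_KI_LX)
  then show "vI F i"
    using sat_step[OF i(1) order.refl] agree by blast
qed

definition witness_state :: "nat \<Rightarrow> nat \<Rightarrow> state" where
  "witness_state l u =
     (if u = 0 then (if vI F l then WX l else WXb l)
      else if z_witness l (LZ l u) then WZ l u else WZb l u)"

definition witness_block :: "nat \<Rightarrow> state list" where
  "witness_block l = map (witness_state l) [0..<Suc (j l)]"

primrec witness_track :: "nat \<Rightarrow> state list" where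
  "witness_track 0 = [S0]"
| "witness_track (Suc l) = witness_block (Suc l) @ witness_track l"

lemma witness_state_in_layer: "witness_state l u \<in> layer l u"
  by (simp add: witness_state_def layer_def)

lemma WXb_eq_witness_state: "WXb k = witness_state m u \<longleftrightarrow> u = 0 \<and> m = k \<and> \<not> vI F k"
  and WZb_eq_witness_state: "WZb k v = witness_state m u \<longleftrightarrow> u \<noteq> 0 \<and> m = k \<and> u = v \<and> \<not> z_witness m (LZ m u)"
  and Sb_neq_witness_state: "Sb c \<noteq> witness_state m u"
  and S0_neq_witness_state: "S0 \<noteq> witness_state m u"
  and block_witness_state: "block (witness_state m u) = m"
  by (auto simp: witness_state_def)

lemma hd_witness_track: "1 \<le> l \<Longrightarrow> hd (witness_track l) = witness_state l 0"
  by (cases l) (simp_all add: witness_block_def hd_map del: upt_Suc)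

lemma set_witness_track:
  "w \<in> set (witness_track l) \<longleftrightarrow> w = S0 \<or> (\<exists>m u. 1 \<le> m \<and> m \<le> l \<and> u \<le> j m \<and> w = witness_state m u)"
proof (induction l)
  case (Suc l)
  have "w \<in> set (witness_block (Suc l)) \<longleftrightarrow> (\<exists>u. u \<le> j (Suc l) \<and> w = witness_state (Suc l) u)"
    by (auto simp: witness_block_def less_Suc_eq_le simp del: upt_Suc)
  then show ?case
    using Suc by (auto simp: le_Suc_eq)
qed simp

lemma is_track_witness_block: "1 \<le> l \<Longrightarrow> l \<le> n \<Longrightarrow> is_track (KI n j) (witness_block l)"
  unfolding is_track_def
proof (intro conjI allI impI)
  assume l: "1 \<le> l" "l \<le> n"
  show "witness_block l \<noteq> []"
    by (simp add: witness_block_def del: upt_Suc)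
  have "witness_state l u \<in> KI_states n j" if "u \<le> j l" for u
    using layer_subset_KI_states[where j = j, OF l that] witness_state_in_layer by blast
  then show "set (witness_block l) \<subseteq> kW (KI n j)"
    by (auto simp: witness_block_def less_Suc_eq_le simp del: upt_Suc)
  fix p
  assume "Suc p < length (witness_block l)"
  then have p: "p < j l"
    by (simp add: witness_block_def del: upt_Suc)
  then show "(witness_block l ! p, witness_block l ! Suc p) \<in> kR (KI n j)"
    using KI_trans_layer[where j = j, OF l p witness_state_in_layer witness_state_in_layer]
    by (simp add: witness_block_def nth_map_upt del: upt_Suc)
qed

lemma is_track_witness_track: "l \<le> n \<Longrightarrow> is_track (KI n j) (witness_track l)"
proof (induction l)
  case 0
  then show ?case
    by (simp add: is_track_singleton KI_states_S0)
next
  case (Suc l)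
  have last_block: "last (witness_block (Suc l)) \<in> layer (Suc l) (j (Suc l))"
    using witness_state_in_layer by (simp add: witness_block_def last_map del: upt_Suc)
  have "(last (witness_block (Suc l)), hd (witness_track l)) \<in> KI_trans n j"
  proof (cases l)
    case 0
    then show ?thesis
      using Suc.prems last_block KI_trans_to_S0 by simp
  next
    case (Suc l')
    have "(last (witness_block (Suc l)), witness_state l 0) \<in> KI_trans n j"
      using KI_trans_down[where j = j and b = "witness_state l 0", OF _ Suc.prems last_block]
        witness_state_in_layer[of l 0] \<open>l = Suc l'\<close>
      by simp
    moreover have "hd (witness_track l) = witness_state l 0"
      using hd_witness_track[of l] \<open>l = Suc l'\<close> by (simp del: witness_track.simps)
    ultimately show ?thesis
      by simp
  qed
  then show ?case
    using Suc is_track_witness_block[of "Suc l"] by (auto intro!: is_track_append)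
qed

lemma hsat_phi_body_witness_track:
  assumes i: "1 \<le> i" "i \<le> n" and vI_i: "vI F i"
    and prev: "\<And>l. 1 \<le> l \<Longrightarrow> l < i \<Longrightarrow> hsat (KI n j) p [Sb l, WX l] \<longleftrightarrow> vI F l"
  shows "hsat (KI n j) (phi_body n F p) (witness_track i)"
proof -
  let ?\<rho> = "witness_track i"
  let ?val = "track_val (KI n j) ?\<rho>"
  have WXb_in: "WXb k \<in> set ?\<rho> \<longleftrightarrow> 1 \<le> k \<and> k \<le> i \<and> \<not> vI F k" for k
    by (auto simp: set_witness_track WXb_eq_witness_state S0_neq_witness_state)
  have val_X: "?val (LX k) \<longleftrightarrow> vI F k" if "1 \<le> k" "k \<le> i" for k
    using that i WXb_in by (simp add: track_val_KI_LX)
  have val_Z: "?val (LZ l u) \<longleftrightarrow> z_witness l (LZ l u)" if "1 \<le> l" "l \<le> i" "1 \<le> u" "u \<le> j l" for l u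
  proof -
    have "LZ l u \<in> Zset n j"
      using that i by (auto simp: Zset_def)
    moreover have "WZb l u \<in> set ?\<rho> \<longleftrightarrow> \<not> z_witness l (LZ l u)"
      using that by (auto simp: set_witness_track WZb_eq_witness_state)
    ultimately show ?thesis
      by (simp add: track_val_KI_LZ)
  qed
  have val_R: "?val (LR l) \<longleftrightarrow> i < l" if "1 \<le> l" "l \<le> n" for l
  proof -
    have in_track: "l \<le> i \<Longrightarrow> witness_state l 0 \<in> set ?\<rho>"
      using that by (auto simp: set_witness_track)
    have "(\<forall>w\<in>set ?\<rho>. w = S0 \<or> block w \<noteq> l) \<longleftrightarrow> i < l"
    proof
      assume "\<forall>w\<in>set ?\<rho>. w = S0 \<or> block w \<noteq> l"
      then show "i < l"
        using in_track block_witness_state S0_neq_witness_state by (metis not_le)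
    next
      assume "i < l"
      then show "\<forall>w\<in>set ?\<rho>. w = S0 \<or> block w \<noteq> l"
        by (auto simp: set_witness_track block_witness_state)
    qed
    then show ?thesis
      using that by (simp add: track_val_KI_LR)
  qed
  show ?thesis
    unfolding hsat_KI_phi_body
  proof (intro conjI ballI impI allI)
    show "Sb c \<notin> set ?\<rho>" for c
      by (auto simp: set_witness_track Sb_neq_witness_state)
    show "S0 \<in> set ?\<rho>"
      by (simp add: set_witness_track)
  next
    fix l
    assume l: "l \<in> {1..n}" and val: "?val (LX l) \<and> \<not> ?val (LR l)"
    then have "l \<le> i" "vI F l"
      using val_R val_X by auto
    then show "peval ?val (F l)"
      using l val_X val_Z by (intro peval_if_vI) auto
  next
    fix l
    assume l: "l \<in> {1..n}" and "WXb l \<in> set (butlast ?\<rho>)"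
    then have "l \<le> i" "\<not> vI F l"
      using WXb_in by (auto dest: in_set_butlastD)
    then have "l < i"
      using vI_i le_neq_implies_less by blast
    then show "\<not> hsat (KI n j) p [Sb l, WX l]"
      using l prev \<open>\<not> vI F l\<close> by auto
  qed
qed

lemma hsat_psi_iff_vI:
  assumes "1 \<le> i" "i \<le> k" "i \<le> n" "last \<sigma> = WX i"
  shows "hsat (KI n j) (psi n F k) \<sigma> \<longleftrightarrow> vI F i"
  using assms
proof (induction k arbitrary: i \<sigma>)
  case (Suc k)
  have prev: "hsat (KI n j) (psi n F k) [Sb l, WX l] \<longleftrightarrow> vI F l" if "1 \<le> l" "l < i" for l
    using Suc.IH[of l "[Sb l, WX l]"] that Suc.prems by simp
  have "hsat (KI n j) (psi n F (Suc k)) \<sigma> \<longleftrightarrow>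
      (\<exists>\<rho>. is_track (KI n j) \<rho> \<and> hd \<rho> = WX i \<and> hsat (KI n j) (phi_body n F (psi n F k)) \<rho>)"
    using Suc.prems(4) by simp
  also have "\<dots> \<longleftrightarrow> vI F i"
  proof
    assume "\<exists>\<rho>. is_track (KI n j) \<rho> \<and> hd \<rho> = WX i \<and> hsat (KI n j) (phi_body n F (psi n F k)) \<rho>"
    then show "vI F i"
      using vI_if_hsat_phi_body[OF _ _ prev] Suc.prems by blast
  next
    assume "vI F i"
    moreover have "hd (witness_track i) = WX i" if "vI F i"
      using Suc.prems(1) that by (simp add: hd_witness_track witness_state_def)
    ultimately show "\<exists>\<rho>. is_track (KI n j) \<rho> \<and> hd \<rho> = WX i \<and> hsat (KI n j) (phi_body n F (psi n F k)) \<rho>"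
      using is_track_witness_track hsat_phi_body_witness_track[OF _ _ _ prev] Suc.prems by blast
  qed
  finally show ?case .
qed simp

end

theorem mainTheorem6:
  fixes n :: nat and j :: "nat \<Rightarrow> nat" and F :: "nat \<Rightarrow> letter pform"
  assumes "1 \<le> n" and "snsat_instance n j F"
  shows "vI F n \<longleftrightarrow> kmodels (KI n j) (HImp (HBoxB HBot) (psi n F n))"
proof -
  interpret snsat_reduction n j F
    using assms(2) by unfold_locales
  have "kinit (KI n j) \<in> kW (KI n j)"
    using assms(1) by (simp add: KI_states_WX)
  then have "kmodels (KI n j) (HImp (HBoxB HBot) (psi n F n)) \<longleftrightarrow> hsat (KI n j) (psi n F n) [WX n]"
    by (simp add: kmodels_HImp_HBoxB_HBot)
  also have "\<dots> \<longleftrightarrow> vI F n"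
    using hsat_psi_iff_vI assms(1) by simp
  finally show ?thesis
    by simp
qed

end
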